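(* Assume $\mathbb P(T(X)>1-\alpha)>0$, that the law of $X$ is non-atomic, that for every $C\in\mathcal I$ the random variable $p_C(X)$ has a continuous, non-atomic distribution, and that for every distinct $C_1,C_2\in\mathcal I$ any nontrivial linear combination of $p_{C_1}(X)$ and $p_{C_2}(X)$ has a non-atomic distribution. Then: (1) $\mu^*=\min\{\mu\ge 0: G(D^\mu,C^\mu)\le 0\}$ exists and is finite; (2) $(D^{\mu^*},C^{\mu^*})$ is an optimal solution of the problem of maximizing $\Pi(D,C)$ over all $D:\mathcal X\to\{0,1\}$, $C:\mathcal X\to\mathcal I$ subject to $G(D,C)\le 0$.
   Context: Let $(X,Y)\sim P_{XY}$ on $\mathcal X\times\mathcal Y$, $\alpha\in(0,1)$. $\mathcal I$ is a finite collection of subsets of $\mathcal Y$ enumerated in a fixed lexicographic order, and $w:\mathcal I\to(0,B)$ is a bounded positive weight. For $x\in\mathcal X$, $C\in\mathcal I$ write $p_C(x)=\mathbb P(Y\in C\mid X=x)$, and for $\mu\ge0$ let $\ell_{x,C}(\mu)=w(C)p_C(x)+\mu(p_C(x)-(1-\alpha))$ and $\mathcal U_x(\mu)=\max_{C\in\mathcal I}\ell_{x,C}(\mu)$. $C^\mu(x)$ is a maximizer of $\ell_{x,C}(\mu)$ over $C\in\mathcal I$, ties broken in favor of the largest $w(C)$ and then the smallest index in the ordering; $D^\mu(x)=\mathbb 1\{\mathcal U_x(\mu)\ge 0\}$. $T(x)=\max_{C\in\mathcal I}p_C(x)$. For $D:\mathcal X\to\{0,1\}$, $C:\mathcal X\to\mathcal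 I$: $\Pi(D,C)=\mathbb E[w(C(X))p_{C(X)}(X)D(X)]$ and $G(D,C)=\mathbb E[(1-p_{C(X)}(X)-\alpha)D(X)]$. *)

theory Defs
  imports "HOL-Probability.Probability"
begin

text \<open>Conditional probability p_C(x) = P(Y in C | X = x), given by a Markov kernel K
  (regular conditional law of Y given X = x).\<close>
definition pC :: "('x \<Rightarrow> 'y measure) \<Rightarrow> 'y set \<Rightarrow> 'x \<Rightarrow> real" where
  "pC K C x = measure (K x) C"

definition ell :: "('x \<Rightarrow> 'y measure) \<Rightarrow> ('y set \<Rightarrow> real) \<Rightarrow> real \<Rightarrow> 'x \<Rightarrow> 'y set \<Rightarrow> real \<Rightarrow> real" where
  "ell K w \<alpha> x C \<mu> = w C * pC K C x + \<mu> * (pC K C x - (1 - \<alpha>))"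

definition Ux :: "('x \<Rightarrow> 'y measure) \<Rightarrow> 'y set list \<Rightarrow> ('y set \<Rightarrow> real) \<Rightarrow> real \<Rightarrow> real \<Rightarrow> 'x \<Rightarrow> real" where
  "Ux K Is w \<alpha> \<mu> x = Max ((\<lambda>C. ell K w \<alpha> x C \<mu>) ` set Is)"

definition maxidx :: "('x \<Rightarrow> 'y measure) \<Rightarrow> 'y set list \<Rightarrow> ('y set \<Rightarrow> real) \<Rightarrow> real \<Rightarrow> real \<Rightarrow> 'x \<Rightarrow> nat set" where
  "maxidx K Is w \<alpha> \<mu> x = {i. i < length Is \<and> ell K w \<alpha> x (Is ! i) \<mu> = Ux K Is w \<alpha> \<mu> x}"

definition Cmu :: "('x \<Rightarrow> 'y measure) \<Rightarrow> 'y set list \<Rightarrow> ('y set \<Rightarrow> real) \<Rightarrow> real \<Rightarrow> real \<Rightarrow> 'x \<Rightarrow> 'y set" where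
  "Cmu K Is w \<alpha> \<mu> x =
     (let S = maxidx K Is w \<alpha> \<mu> x;
          wm = Max ((\<lambda>i. w (Is ! i)) ` S)
      in Is ! Min {i \<in> S. w (Is ! i) = wm})"

definition Dmu :: "('x \<Rightarrow> 'y measure) \<Rightarrow> 'y set list \<Rightarrow> ('y set \<Rightarrow> real) \<Rightarrow> real \<Rightarrow> real \<Rightarrow> 'x \<Rightarrow> bool" where
  "Dmu K Is w \<alpha> \<mu> x = (Ux K Is w \<alpha> \<mu> x \<ge> 0)"

definition Tx :: "('x \<Rightarrow> 'y measure) \<Rightarrow> 'y set list \<Rightarrow> 'x \<Rightarrow> real" where
  "Tx K Is x = Max ((\<lambda>C. pC K C x) ` set Is)"

definition Pi_obj :: "'x measure \<Rightarrow> ('x \<Rightarrow> 'y measure) \<Rightarrow> ('y set \<Rightarrow> real) \<Rightarrow> ('x \<Rightarrow> bool) \<Rightarrow> ('x \<Rightarrow> 'y set) \<Rightarrow> real" where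
  "Pi_obj M K w D C = (\<integral>x. w (C x) * pC K (C x) x * of_bool (D x) \<partial>M)"

definition G_con :: "'x measure \<Rightarrow> ('x \<Rightarrow> 'y measure) \<Rightarrow> real \<Rightarrow> ('x \<Rightarrow> bool) \<Rightarrow> ('x \<Rightarrow> 'y set) \<Rightarrow> real" where
  "G_con M K \<alpha> D C = (\<integral>x. (1 - pC K (C x) x - \<alpha>) * of_bool (D x) \<partial>M)"

definition nonatomic :: "'x measure \<Rightarrow> bool" where
  "nonatomic M \<longleftrightarrow> (\<forall>A\<in>sets M. emeasure M A > 0 \<longrightarrow>
      (\<exists>B\<in>sets M. B \<subseteq> A \<and> 0 < emeasure M B \<and> emeasure M B < emeasure M A))"

definition nonatomic_rv :: "'x measure \<Rightarrow> ('x \<Rightarrow> real) \<Rightarrow> bool" where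
  "nonatomic_rv M f \<longleftrightarrow> (\<forall>t. measure M {x \<in> space M. f x = t} = 0)"

definition admissible :: "'x measure \<Rightarrow> 'y set list \<Rightarrow> ('x \<Rightarrow> bool) \<Rightarrow> ('x \<Rightarrow> 'y set) \<Rightarrow> bool" where
  "admissible M Is D C \<longleftrightarrow> D \<in> M \<rightarrow>\<^sub>M count_space UNIV \<and> C \<in> M \<rightarrow>\<^sub>M count_space UNIV
      \<and> (\<forall>x\<in>space M. C x \<in> set Is)"

end

theory Submission
  imports Defs
begin

(* For every \<mu> \<ge> 0 the rule (D\<^sup>\<mu>, C\<^sup>\<mu>) maximises the Lagrangian integrand
   \<ell>_{x,C(x)}(\<mu>) D(x) pointwise, so \<Pi>(D, C) - \<mu> G(D, C) \<le> \<Pi>(D\<^sup>\<mu>, C\<^sup>\<mu>) - \<mu> g(\<mu>)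
   with g(\<mu>) = G(D\<^sup>\<mu>, C\<^sup>\<mu>).  The non-atomicity hypotheses make the values \<ell>_{x,C}(\<mu>)
   pairwise distinct and nonzero for almost every x, so (D\<^sup>\<mu>, C\<^sup>\<mu>)(x) is locally constant
   in \<mu> and g is continuous by dominated convergence.  As \<mu> \<rightarrow> \<infinity>, C\<^sup>\<mu>(x) attains T(x) and
   D\<^sup>\<mu>(x) becomes 1{T(x) > 1 - \<alpha>}, so g(\<mu>) tends to -E[(T(X) - (1 - \<alpha>))\<^sup>+] < 0.
   Hence a least \<mu>\<^sub>0 \<ge> 0 with g(\<mu>\<^sub>0) \<le> 0 exists; by the intermediate value theorem
   \<mu>\<^sub>0 g(\<mu>\<^sub>0) = 0, which turns weak duality into optimality. *)

lemma exists_least_nonpos_point: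
  fixes f :: "real \<Rightarrow> real"
  assumes cont: "continuous_on {0..} f" and "0 \<le> a" "f a \<le> 0"
  obtains m where "0 \<le> m" "f m \<le> 0" "\<And>\<mu>. 0 \<le> \<mu> \<Longrightarrow> f \<mu> \<le> 0 \<Longrightarrow> m \<le> \<mu>" "m * f m = 0"
proof -
  define S where "S = {0..} \<inter> f -` {..0}"
  have "closed S"
    unfolding S_def by (rule continuous_closed_preimage[OF cont]) auto
  moreover have "a \<in> S" "bdd_below S"
    using assms unfolding S_def by (auto intro: bdd_belowI[of _ 0])
  ultimately have "Inf S \<in> S"
    by (intro closed_contains_Inf) auto
  then have m: "0 \<le> Inf S" "f (Inf S) \<le> 0"
    unfolding S_def by auto
  have least: "Inf S \<le> \<mu>" if "0 \<le> \<mu>" "f \<mu> \<le> 0" for \<mu>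
    using that \<open>bdd_below S\<close> by (intro cInf_lower) (auto simp: S_def)
  have "f (Inf S) = 0" if pos: "0 < f 0"
  proof -
    have "continuous_on {0..Inf S} f"
      using continuous_on_subset[OF cont] by auto
    then obtain z where "0 \<le> z" "z \<le> Inf S" "f z = 0"
      using IVT2'[of f "Inf S" 0 0] m pos by force
    with least[of z] show ?thesis by simp
  qed
  moreover have "Inf S = 0" if "f 0 \<le> 0"
    using least[of 0] m that by simp
  ultimately show ?thesis
    using that m least by force
qed

lemma eventually_affine_pos_at_top:
  fixes a b :: real
  assumes "0 < a"
  shows "\<forall>\<^sub>F \<mu> in at_top. 0 < a * \<mu> + b"
  using eventually_gt_at_top[of "- b / a"]
  by eventually_elim (use assms in \<open>simp add: field_simps\<close>)

lemma (in finite_measure) nonatomic_rv_AE_neq: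
  assumes "nonatomic_rv M f" and [measurable]: "f \<in> borel_measurable M"
  shows "AE x in M. f x \<noteq> t"
proof -
  have "emeasure M {x \<in> space M. f x = t} = 0"
    using assms(1) unfolding nonatomic_rv_def by (simp add: emeasure_eq_measure)
  then show ?thesis
    by (subst AE_iff_measurable[of "{x \<in> space M. f x = t}"]) auto
qed

definition ell_generic :: "('x \<Rightarrow> 'y measure) \<Rightarrow> 'y set list \<Rightarrow> ('y set \<Rightarrow> real) \<Rightarrow> real \<Rightarrow> real \<Rightarrow> 'x \<Rightarrow> bool" where
  "ell_generic K Is w \<alpha> \<mu> x \<longleftrightarrow>
     inj_on (\<lambda>C. ell K w \<alpha> x C \<mu>) (set Is) \<and> (\<forall>C\<in>set Is. ell K w \<alpha> x C \<mu> \<noteq> 0)"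

context
  fixes K :: "'x \<Rightarrow> 'y measure" and Is :: "'y set list" and w :: "'y set \<Rightarrow> real"
    and \<alpha> :: real and x :: 'x
begin

lemma ell_le_Ux: "C \<in> set Is \<Longrightarrow> ell K w \<alpha> x C \<mu> \<le> Ux K Is w \<alpha> \<mu> x"
  unfolding Ux_def by (rule Max_ge) auto

lemma Cmu_maximizes:
  assumes "Is \<noteq> []"
  shows "Cmu K Is w \<alpha> \<mu> x \<in> set Is" and "ell K w \<alpha> x (Cmu K Is w \<alpha> \<mu> x) \<mu> = Ux K Is w \<alpha> \<mu> x"
proof -
  define S where "S = maxidx K Is w \<alpha> \<mu> x"
  define Smax where "Smax = {i \<in> S. w (Is ! i) = Max ((\<lambda>i. w (Is ! i)) ` S)}"
  have "Ux K Is w \<alpha> \<mu> x \<in> (\<lambda>C. ell K w \<alpha> x C \<mu>) ` set Is"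
    unfolding Ux_def using assms by (intro Max_in) auto
  then have "S \<noteq> {}"
    unfolding S_def maxidx_def by (auto simp: in_set_conv_nth)
  moreover have "finite S"
    unfolding S_def maxidx_def by auto
  ultimately have "Smax \<noteq> {}"
    unfolding Smax_def using Max_in[of "(\<lambda>i. w (Is ! i)) ` S"] by fastforce
  then have "Min Smax \<in> S"
    using Min_in[of Smax] \<open>finite S\<close> unfolding Smax_def by auto
  moreover have "Cmu K Is w \<alpha> \<mu> x = Is ! Min Smax"
    unfolding Cmu_def Smax_def S_def Let_def ..
  ultimately show "Cmu K Is w \<alpha> \<mu> x \<in> set Is" "ell K w \<alpha> x (Cmu K Is w \<alpha> \<mu> x) \<mu> = Ux K Is w \<alpha> \<mu> x"
    unfolding S_def maxidx_def by auto
qed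

lemma Cmu_eq_strict_maximizer:
  assumes "Is \<noteq> []" "C0 \<in> set Is"
    and "\<And>C. C \<in> set Is \<Longrightarrow> C \<noteq> C0 \<Longrightarrow> ell K w \<alpha> x C \<mu> < ell K w \<alpha> x C0 \<mu>"
  shows "Cmu K Is w \<alpha> \<mu> x = C0"
proof (rule ccontr)
  assume "Cmu K Is w \<alpha> \<mu> x \<noteq> C0"
  then have "Ux K Is w \<alpha> \<mu> x < ell K w \<alpha> x C0 \<mu>"
    using assms(3) Cmu_maximizes[OF assms(1), of \<mu>] by metis
  then show False
    using ell_le_Ux[OF assms(2), of \<mu>] by simp
qed

lemma Dmu_iff: "Is \<noteq> [] \<Longrightarrow> Dmu K Is w \<alpha> \<mu> x \<longleftrightarrow> 0 \<le> ell K w \<alpha> x (Cmu K Is w \<alpha> \<mu> x) \<mu>"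
  unfolding Dmu_def by (simp add: Cmu_maximizes)

lemma Lagrangian_le_Cmu_Dmu:
  assumes "Is \<noteq> []" "C \<in> set Is"
  shows "ell K w \<alpha> x C \<mu> * of_bool d \<le> ell K w \<alpha> x (Cmu K Is w \<alpha> \<mu> x) \<mu> * of_bool (Dmu K Is w \<alpha> \<mu> x)"
  using ell_le_Ux[OF assms(2), of \<mu>] Cmu_maximizes(2)[OF assms(1), of \<mu>] unfolding Dmu_def by auto

lemma Tx_attained: "Is \<noteq> [] \<Longrightarrow> \<exists>C\<in>set Is. pC K C x = Tx K Is x"
proof -
  assume "Is \<noteq> []"
  then have "Tx K Is x \<in> (\<lambda>C. pC K C x) ` set Is"
    unfolding Tx_def by (intro Max_in) auto
  then show ?thesis by force
qed

lemma pC_le_Tx: "C \<in> set Is \<Longrightarrow> pC K C x \<le> Tx K Is x"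
  unfolding Tx_def by (rule Max_ge) auto

lemma eventually_Cmu_Dmu_locally_constant:
  assumes Is_ne: "Is \<noteq> []" and generic: "ell_generic K Is w \<alpha> \<mu>0 x"
  shows "\<forall>\<^sub>F \<mu> in nhds \<mu>0. Cmu K Is w \<alpha> \<mu> x = Cmu K Is w \<alpha> \<mu>0 x \<and> Dmu K Is w \<alpha> \<mu> x = Dmu K Is w \<alpha> \<mu>0 x"
proof -
  define C0 where "C0 = Cmu K Is w \<alpha> \<mu>0 x"
  have C0: "C0 \<in> set Is" "ell K w \<alpha> x C0 \<mu>0 = Ux K Is w \<alpha> \<mu>0 x"
    unfolding C0_def using Cmu_maximizes[OF Is_ne, of \<mu>0] by auto
  have ell_cont: "((\<lambda>\<mu>. ell K w \<alpha> x C \<mu>) \<longlongrightarrow> ell K w \<alpha> x C \<mu>0) (nhds \<mu>0)" for C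
    unfolding ell_def by (intro tendsto_intros filterlim_ident)
  have "\<forall>\<^sub>F \<mu> in nhds \<mu>0. \<forall>C\<in>set Is. C \<noteq> C0 \<longrightarrow> ell K w \<alpha> x C \<mu> < ell K w \<alpha> x C0 \<mu>"
  proof (rule eventually_ball_finite[OF finite_set], rule ballI)
    fix C assume C: "C \<in> set Is"
    show "\<forall>\<^sub>F \<mu> in nhds \<mu>0. C \<noteq> C0 \<longrightarrow> ell K w \<alpha> x C \<mu> < ell K w \<alpha> x C0 \<mu>"
    proof (cases "C = C0")
      case False
      then have "ell K w \<alpha> x C \<mu>0 \<noteq> ell K w \<alpha> x C0 \<mu>0"
        using C C0(1) generic unfolding ell_generic_def inj_on_def by blast
      then have "0 < ell K w \<alpha> x C0 \<mu>0 - ell K w \<alpha> x C \<mu>0"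
        using ell_le_Ux[OF C, of \<mu>0] C0(2) by simp
      from order_tendstoD(1)[OF tendsto_diff[OF ell_cont ell_cont] this]
      show ?thesis
        by eventually_elim simp
    qed simp
  qed
  moreover have "\<forall>\<^sub>F \<mu> in nhds \<mu>0. (0 \<le> ell K w \<alpha> x C0 \<mu>) = (0 \<le> ell K w \<alpha> x C0 \<mu>0)"
  proof (cases "0 < ell K w \<alpha> x C0 \<mu>0")
    case True
    from order_tendstoD(1)[OF ell_cont True] show ?thesis
      by eventually_elim (use True in simp)
  next
    case False
    with generic C0(1) have neg: "ell K w \<alpha> x C0 \<mu>0 < 0"
      unfolding ell_generic_def by force
    from order_tendstoD(2)[OF ell_cont neg] show ?thesis
      by eventually_elim (use neg in simp)
  qed
  ultimately show ?thesis
  proof eventually_elim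
    case (elim \<mu>)
    then have "Cmu K Is w \<alpha> \<mu> x = C0"
      using Cmu_eq_strict_maximizer[OF Is_ne C0(1)] by blast
    with elim(2) show ?case
      unfolding Dmu_iff[OF Is_ne] C0_def by simp
  qed
qed

lemma eventually_Cmu_Dmu_at_top:
  assumes Is_ne: "Is \<noteq> []" and T_ne: "Tx K Is x \<noteq> 1 - \<alpha>"
  shows "\<forall>\<^sub>F \<mu> in at_top. pC K (Cmu K Is w \<alpha> \<mu> x) x = Tx K Is x
                          \<and> Dmu K Is w \<alpha> \<mu> x = (Tx K Is x > 1 - \<alpha>)"
proof -
  define T where "T = Tx K Is x"
  obtain Cs where Cs: "Cs \<in> set Is" "pC K Cs x = T"
    using Tx_attained[OF Is_ne] unfolding T_def by blast
  have "\<forall>\<^sub>F \<mu> in at_top. \<forall>C\<in>set Is. pC K C x < T \<longrightarrow> ell K w \<alpha> x C \<mu> < ell K w \<alpha> x Cs \<mu>"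
  proof (rule eventually_ball_finite[OF finite_set], rule ballI)
    fix C
    show "\<forall>\<^sub>F \<mu> in at_top. pC K C x < T \<longrightarrow> ell K w \<alpha> x C \<mu> < ell K w \<alpha> x Cs \<mu>"
    proof (cases "pC K C x < T")
      case True
      then have "0 < T - pC K C x"
        by simp
      from eventually_affine_pos_at_top[OF this, of "w Cs * T - w C * pC K C x"] show ?thesis
        by eventually_elim (simp add: ell_def Cs(2) algebra_simps)
    qed simp
  qed
  moreover have "\<forall>\<^sub>F \<mu> in at_top. \<forall>C\<in>set Is. pC K C x = T \<longrightarrow> (0 \<le> ell K w \<alpha> x C \<mu>) = (T > 1 - \<alpha>)"
  proof (rule eventually_ball_finite[OF finite_set], rule ballI)
    fix C
    show "\<forall>\<^sub>F \<mu> in at_top. pC K C x = T \<longrightarrow> (0 \<le> ell K w \<alpha> x C \<mu>) = (T > 1 - \<alpha>)"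
    proof (cases "T > 1 - \<alpha>")
      case True
      then have "0 < T - (1 - \<alpha>)"
        by simp
      from eventually_affine_pos_at_top[OF this, of "w C * T"] show ?thesis
        by eventually_elim (use True in \<open>simp add: ell_def algebra_simps\<close>)
    next
      case False
      then have below: "0 < 1 - \<alpha> - T"
        using T_ne unfolding T_def by simp
      from eventually_affine_pos_at_top[OF this, of "- w C * T"] show ?thesis
        by eventually_elim (use below in \<open>simp add: ell_def algebra_simps\<close>)
    qed
  qed
  ultimately show ?thesis
  proof eventually_elim
    case (elim \<mu>)
    define C' where "C' = Cmu K Is w \<alpha> \<mu> x"
    have C': "C' \<in> set Is" "ell K w \<alpha> x Cs \<mu> \<le> ell K w \<alpha> x C' \<mu>"
      unfolding C'_def using Cmu_maximizes[OF Is_ne, of \<mu>] ell_le_Ux[OF Cs(1), of \<mu>] by auto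
    have "pC K C' x = T"
    proof (rule ccontr)
      assume "pC K C' x \<noteq> T"
      then have "pC K C' x < T"
        using pC_le_Tx[OF C'(1)] unfolding T_def by simp
      then show False
        using elim(1) C' by fastforce
    qed
    with elim(2) C'(1) show ?case
      unfolding T_def C'_def Dmu_iff[OF Is_ne] by simp
  qed
qed

end

locale set_prediction_problem = prob_space M
  for M :: "'x measure" +
  fixes N :: "'y measure" and K :: "'x \<Rightarrow> 'y measure"
    and Is :: "'y set list" and w :: "'y set \<Rightarrow> real" and B \<alpha> :: real
  assumes K_measurable: "K \<in> M \<rightarrow>\<^sub>M prob_algebra N"
    and \<alpha>_bounds: "\<alpha> \<in> {0<..<1}"
    and Is_nonempty: "Is \<noteq> []"
    and w_bounds: "\<And>C. C \<in> set Is \<Longrightarrow> 0 < w C \<and> w C < B"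
    and pC_nonatomic: "\<And>C. C \<in> set Is \<Longrightarrow> nonatomic_rv M (pC K C)"
    and pC_pair_nonatomic: "\<And>C1 C2 a b. C1 \<in> set Is \<Longrightarrow> C2 \<in> set Is \<Longrightarrow> C1 \<noteq> C2 \<Longrightarrow>
           (a, b) \<noteq> (0, 0) \<Longrightarrow> nonatomic_rv M (\<lambda>x. a * pC K C1 x + b * pC K C2 x)"
begin

abbreviation Gmu :: "real \<Rightarrow> real" where
  "Gmu \<mu> \<equiv> G_con M K \<alpha> (Dmu K Is w \<alpha> \<mu>) (Cmu K Is w \<alpha> \<mu>)"

lemma kernel_prob_space: "x \<in> space M \<Longrightarrow> prob_space (K x) \<and> sets (K x) = sets N"
  using measurable_space[OF K_measurable] by (simp add: space_prob_algebra)

lemma pC_bounds: "x \<in> space M \<Longrightarrow> 0 \<le> pC K C x \<and> pC K C x \<le> 1"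
  using kernel_prob_space[of x] by (simp add: pC_def prob_space.prob_le_1)

lemma measurable_pC [measurable]: "pC K C \<in> borel_measurable M"
proof (cases "C \<in> sets N")
  case True
  then show ?thesis
    unfolding pC_def using measurable_compose[OF K_measurable measurable_measure_prob_algebra] by simp
next
  case False
  then have "pC K C x = 0" if "x \<in> space M" for x
    unfolding pC_def using kernel_prob_space[OF that] by (simp add: measure_notin_sets)
  then show ?thesis
    using measurable_cong[of M "pC K C" "\<lambda>_. 0"] by simp
qed

lemma measurable_Ux [measurable]: "Ux K Is w \<alpha> \<mu> \<in> borel_measurable M"
  unfolding Ux_def ell_def by (intro borel_measurable_Max) auto

lemma measurable_Tx [measurable]: "Tx K Is \<in> borel_measurable M"
  unfolding Tx_def by (intro borel_measurable_Max) auto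

lemma measurable_Dmu [measurable]: "Dmu K Is w \<alpha> \<mu> \<in> M \<rightarrow>\<^sub>M count_space UNIV"
  unfolding Dmu_def by measurable

lemma measurable_maxidx: "maxidx K Is w \<alpha> \<mu> \<in> M \<rightarrow>\<^sub>M count_space (Pow {..<length Is})"
proof (subst measurable_count_space_eq2, simp, intro conjI ballI)
  show "maxidx K Is w \<alpha> \<mu> \<in> space M \<rightarrow> Pow {..<length Is}"
    unfolding maxidx_def by auto
  fix S assume "S \<in> Pow {..<length Is}"
  then have "maxidx K Is w \<alpha> \<mu> -` {S} \<inter> space M =
      {x \<in> space M. \<forall>i\<in>{..<length Is}. (i \<in> S) = (ell K w \<alpha> x (Is ! i) \<mu> = Ux K Is w \<alpha> \<mu> x)}"
    unfolding maxidx_def by auto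
  also have "\<dots> \<in> sets M"
    unfolding ell_def by measurable
  finally show "maxidx K Is w \<alpha> \<mu> -` {S} \<inter> space M \<in> sets M" .
qed

lemma measurable_Cmu: "Cmu K Is w \<alpha> \<mu> \<in> M \<rightarrow>\<^sub>M count_space UNIV"
proof -
  have "(\<lambda>x. (\<lambda>S. Is ! Min {i \<in> S. w (Is ! i) = Max ((\<lambda>i. w (Is ! i)) ` S)})
                (maxidx K Is w \<alpha> \<mu> x)) \<in> M \<rightarrow>\<^sub>M count_space UNIV"
    by (rule measurable_compose[OF measurable_maxidx]) simp
  then show ?thesis
    unfolding Cmu_def[abs_def] Let_def .
qed

lemma admissible_Dmu_Cmu: "admissible M Is (Dmu K Is w \<alpha> \<mu>) (Cmu K Is w \<alpha> \<mu>)"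
  unfolding admissible_def by (simp add: measurable_Dmu measurable_Cmu Cmu_maximizes(1)[OF Is_nonempty])

lemma admissible_measurable_set:
  assumes "admissible M Is D C"
  shows "C \<in> M \<rightarrow>\<^sub>M count_space (set Is)"
proof (subst measurable_count_space_eq2, simp, intro conjI ballI)
  show "C \<in> space M \<rightarrow> set Is"
    using assms unfolding admissible_def by auto
  fix c
  show "C -` {c} \<inter> space M \<in> sets M"
    using assms measurable_sets[of C M "count_space UNIV" "{c}"] unfolding admissible_def by simp
qed

lemma integrable_admissible:
  fixes f :: "'y set \<Rightarrow> 'x \<Rightarrow> real"
  assumes adm: "admissible M Is D C"
    and meas: "\<And>c. c \<in> set Is \<Longrightarrow> f c \<in> borel_measurable M"
    and bound: "\<And>c x. c \<in> set Is \<Longrightarrow> x \<in> space M \<Longrightarrow> \<bar>f c x\<bar> \<le> b"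
  shows "integrable M (\<lambda>x. f (C x) x * of_bool (D x))"
proof (rule integrable_const_bound[where B=b])
  have "D \<in> M \<rightarrow>\<^sub>M count_space UNIV"
    using adm unfolding admissible_def by simp
  then have [measurable]: "(\<lambda>x. of_bool (D x) :: real) \<in> borel_measurable M"
    by (rule measurable_compose) simp
  have [measurable]: "(\<lambda>x. f (C x) x) \<in> borel_measurable M"
    by (rule measurable_compose_countable'[OF _ admissible_measurable_set[OF adm]])
      (auto intro: meas countable_finite)
  show "(\<lambda>x. f (C x) x * of_bool (D x)) \<in> borel_measurable M"
    by measurable
  show "AE x in M. norm (f (C x) x * of_bool (D x)) \<le> b"
  proof (rule AE_I2)
    fix x assume x: "x \<in> space M"
    then have "\<bar>f (C x) x\<bar> \<le> b"
      using adm bound unfolding admissible_def by blast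
    then show "norm (f (C x) x * of_bool (D x)) \<le> b"
      by (cases "D x") auto
  qed
qed

lemma constraint_integrand_bound: "x \<in> space M \<Longrightarrow> \<bar>1 - pC K C x - \<alpha>\<bar> \<le> 1"
  using pC_bounds[of x C] \<alpha>_bounds by auto

lemma objective_integrand_bound:
  assumes "C \<in> set Is" "x \<in> space M"
  shows "\<bar>w C * pC K C x\<bar> \<le> B"
proof -
  have "0 \<le> pC K C x" "pC K C x \<le> 1" "0 < w C" "w C < B"
    using pC_bounds[OF assms(2)] w_bounds[OF assms(1)] by auto
  then have "0 \<le> w C * pC K C x" "w C * pC K C x \<le> w C"
    by (auto intro: mult_left_le)
  with \<open>w C < B\<close> show ?thesis
    by simp
qed

lemma integrable_constraint_integrand:
  "admissible M Is D C \<Longrightarrow> integrable M (\<lambda>x. (1 - pC K (C x) x - \<alpha>) * of_bool (D x))"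
  by (rule integrable_admissible[where b=1]) (auto intro: constraint_integrand_bound)

lemma Lagrangian_integral:
  assumes adm: "admissible M Is D C"
  shows "integrable M (\<lambda>x. ell K w \<alpha> x (C x) \<mu> * of_bool (D x))"
    and "(\<integral>x. ell K w \<alpha> x (C x) \<mu> * of_bool (D x) \<partial>M) = Pi_obj M K w D C - \<mu> * G_con M K \<alpha> D C"
proof -
  have int_Pi: "integrable M (\<lambda>x. w (C x) * pC K (C x) x * of_bool (D x))"
    by (rule integrable_admissible[OF adm, where b=B]) (auto intro: objective_integrand_bound)
  note int_G = integrable_constraint_integrand[OF adm]
  have eq: "(\<lambda>x. ell K w \<alpha> x (C x) \<mu> * of_bool (D x)) =
      (\<lambda>x. w (C x) * pC K (C x) x * of_bool (D x) - \<mu> * ((1 - pC K (C x) x - \<alpha>) * of_bool (D x)))"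
    by (simp add: ell_def algebra_simps)
  show "integrable M (\<lambda>x. ell K w \<alpha> x (C x) \<mu> * of_bool (D x))"
    unfolding eq using int_Pi int_G by simp
  show "(\<integral>x. ell K w \<alpha> x (C x) \<mu> * of_bool (D x) \<partial>M) = Pi_obj M K w D C - \<mu> * G_con M K \<alpha> D C"
    unfolding eq Pi_obj_def G_con_def using int_Pi int_G by simp
qed

lemma Lagrangian_le_at_multiplier:
  assumes adm: "admissible M Is D C"
  shows "Pi_obj M K w D C - \<mu> * G_con M K \<alpha> D C
           \<le> Pi_obj M K w (Dmu K Is w \<alpha> \<mu>) (Cmu K Is w \<alpha> \<mu>) - \<mu> * Gmu \<mu>"
  unfolding Lagrangian_integral(2)[OF adm, symmetric] Lagrangian_integral(2)[OF admissible_Dmu_Cmu, symmetric]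
proof (rule integral_mono_AE[OF Lagrangian_integral(1)[OF adm] Lagrangian_integral(1)[OF admissible_Dmu_Cmu]])
  have "\<forall>x\<in>space M. C x \<in> set Is"
    using adm unfolding admissible_def by blast
  then show "AE x in M. ell K w \<alpha> x (C x) \<mu> * of_bool (D x)
      \<le> ell K w \<alpha> x (Cmu K Is w \<alpha> \<mu> x) \<mu> * of_bool (Dmu K Is w \<alpha> \<mu> x)"
    by (intro AE_I2 Lagrangian_le_Cmu_Dmu[OF Is_nonempty]) blast
qed

lemma optimal_if_complementary_slackness:
  assumes "0 \<le> \<mu>" "\<mu> * Gmu \<mu> = 0" "admissible M Is D C" "G_con M K \<alpha> D C \<le> 0"
  shows "Pi_obj M K w D C \<le> Pi_obj M K w (Dmu K Is w \<alpha> \<mu>) (Cmu K Is w \<alpha> \<mu>)"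
  using Lagrangian_le_at_multiplier[OF assms(3), of \<mu>] assms(2) mult_nonneg_nonpos[OF assms(1,4)]
  by linarith

lemma tendsto_G_con:
  assumes adm: "\<And>n. admissible M Is (D n) (C n)" and [measurable]: "L \<in> borel_measurable M"
    and lim: "AE x in M. \<forall>\<^sub>F n in sequentially. (1 - pC K (C n x) x - \<alpha>) * of_bool (D n x) = L x"
  shows "(\<lambda>n. G_con M K \<alpha> (D n) (C n)) \<longlonglongrightarrow> integral\<^sup>L M L"
  unfolding G_con_def
proof (rule integral_dominated_convergence[where w="\<lambda>_. 1"])
  show "(\<lambda>x. (1 - pC K (C n x) x - \<alpha>) * of_bool (D n x)) \<in> borel_measurable M" for n
    by (rule borel_measurable_integrable[OF integrable_constraint_integrand[OF adm]])
  show "AE x in M. norm ((1 - pC K (C n x) x - \<alpha>) * of_bool (D n x)) \<le> 1" for n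
    using constraint_integrand_bound by (intro AE_I2) (simp add: abs_mult)
  show "AE x in M. (\<lambda>n. (1 - pC K (C n x) x - \<alpha>) * of_bool (D n x)) \<longlonglongrightarrow> L x"
    using lim by eventually_elim (rule tendsto_eventually)
qed simp_all

lemma AE_ell_generic:
  assumes "0 \<le> \<mu>"
  shows "AE x in M. ell_generic K Is w \<alpha> \<mu> x"
proof -
  have distinct: "AE x in M. C1 \<noteq> C2 \<longrightarrow> ell K w \<alpha> x C1 \<mu> \<noteq> ell K w \<alpha> x C2 \<mu>"
    if "C1 \<in> set Is" "C2 \<in> set Is" for C1 C2
  proof (cases "C1 = C2")
    case False
    have "(w C1 + \<mu>, - (w C2 + \<mu>)) \<noteq> (0, 0)"
      using w_bounds[OF that(1)] assms by auto
    from pC_pair_nonatomic[OF that False this]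
    have "AE x in M. (w C1 + \<mu>) * pC K C1 x + (- (w C2 + \<mu>)) * pC K C2 x \<noteq> 0"
      by (rule nonatomic_rv_AE_neq) measurable
    then show ?thesis
      by eventually_elim (simp add: ell_def algebra_simps)
  qed simp
  have nonzero: "AE x in M. ell K w \<alpha> x C \<mu> \<noteq> 0" if "C \<in> set Is" for C
  proof -
    have pos: "0 < w C + \<mu>"
      using w_bounds[OF that] assms by auto
    from nonatomic_rv_AE_neq[OF pC_nonatomic[OF that] measurable_pC]
    have "AE x in M. pC K C x \<noteq> \<mu> * (1 - \<alpha>) / (w C + \<mu>)" .
    then show ?thesis
      by eventually_elim (use pos in \<open>simp add: ell_def field_simps\<close>)
  qed
  have "AE x in M. \<forall>C1\<in>set Is. \<forall>C2\<in>set Is. C1 \<noteq> C2 \<longrightarrow> ell K w \<alpha> x C1 \<mu> \<noteq> ell K w \<alpha> x C2 \<mu>"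
    using distinct by (intro AE_finite_allI[OF finite_set]) auto
  moreover have "AE x in M. \<forall>C\<in>set Is. ell K w \<alpha> x C \<mu> \<noteq> 0"
    using nonzero by (intro AE_finite_allI[OF finite_set])
  ultimately show ?thesis
    unfolding ell_generic_def inj_on_def by eventually_elim blast
qed

lemma isCont_Gmu:
  assumes "0 \<le> \<mu>0"
  shows "isCont Gmu \<mu>0"
proof (rule continuous_at_sequentiallyI)
  fix s :: "nat \<Rightarrow> real" assume s: "s \<longlonglongrightarrow> \<mu>0"
  show "(\<lambda>n. Gmu (s n)) \<longlonglongrightarrow> Gmu \<mu>0"
    unfolding G_con_def[of M K \<alpha> "Dmu K Is w \<alpha> \<mu>0"]
  proof (rule tendsto_G_con[OF admissible_Dmu_Cmu])
    show "(\<lambda>x. (1 - pC K (Cmu K Is w \<alpha> \<mu>0 x) x - \<alpha>) * of_bool (Dmu K Is w \<alpha> \<mu>0 x)) \<in> borel_measurable M"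
      by (rule borel_measurable_integrable[OF integrable_constraint_integrand[OF admissible_Dmu_Cmu]])
    show "AE x in M. \<forall>\<^sub>F n in sequentially.
        (1 - pC K (Cmu K Is w \<alpha> (s n) x) x - \<alpha>) * of_bool (Dmu K Is w \<alpha> (s n) x) =
        (1 - pC K (Cmu K Is w \<alpha> \<mu>0 x) x - \<alpha>) * of_bool (Dmu K Is w \<alpha> \<mu>0 x)"
      using AE_ell_generic[OF assms]
    proof eventually_elim
      case (elim x)
      from eventually_compose_filterlim[OF eventually_Cmu_Dmu_locally_constant[OF Is_nonempty elim] s]
      show ?case
        by eventually_elim simp
    qed
  qed
qed

lemma continuous_on_Gmu: "continuous_on {0..} Gmu"
  using isCont_Gmu by (intro continuous_at_imp_continuous_on) auto

lemma exists_Gmu_neg: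
  assumes posT: "measure M {x \<in> space M. Tx K Is x > 1 - \<alpha>} > 0"
  shows "\<exists>\<mu>\<ge>0. Gmu \<mu> < 0"
proof -
  define L where "L x = (1 - \<alpha> - Tx K Is x) * of_bool (Tx K Is x > 1 - \<alpha>)" for x
  have [measurable]: "L \<in> borel_measurable M"
    unfolding L_def by measurable
  have "AE x in M. \<forall>C\<in>set Is. pC K C x \<noteq> 1 - \<alpha>"
    using nonatomic_rv_AE_neq[OF pC_nonatomic measurable_pC] by (intro AE_finite_allI[OF finite_set])
  then have "AE x in M. Tx K Is x \<noteq> 1 - \<alpha>"
  proof eventually_elim
    case (elim x)
    then show ?case
      using Tx_attained[OF Is_nonempty, where K=K and x=x] by auto
  qed
  then have "AE x in M. \<forall>\<^sub>F n in sequentially.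
      (1 - pC K (Cmu K Is w \<alpha> (real n) x) x - \<alpha>) * of_bool (Dmu K Is w \<alpha> (real n) x) = L x"
  proof eventually_elim
    case (elim x)
    from eventually_compose_filterlim[OF eventually_Cmu_Dmu_at_top[OF Is_nonempty elim, where w=w] filterlim_real_sequentially]
    show ?case
      by eventually_elim (simp add: L_def)
  qed
  then have lim: "(\<lambda>n. Gmu (real n)) \<longlonglongrightarrow> integral\<^sup>L M L"
    by (intro tendsto_G_con admissible_Dmu_Cmu) simp
  have "integral\<^sup>L M L < integral\<^sup>L M (\<lambda>_. 0)"
  proof (rule integral_less_AE[where A="{x \<in> space M. Tx K Is x > 1 - \<alpha>}"])
    have "\<bar>L x\<bar> \<le> 1" if "x \<in> space M" for x
    proof -
      obtain C where "C \<in> set Is" "pC K C x = Tx K Is x"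
        using Tx_attained[OF Is_nonempty, where K=K and x=x] by blast
      then show ?thesis
        using pC_bounds[OF that, of C] \<alpha>_bounds unfolding L_def by auto
    qed
    then show "integrable M L"
      by (intro integrable_const_bound[where B=1]) auto
    show "emeasure M {x \<in> space M. Tx K Is x > 1 - \<alpha>} \<noteq> 0"
      using posT by (simp add: emeasure_eq_measure)
    show "{x \<in> space M. Tx K Is x > 1 - \<alpha>} \<in> sets M"
      by measurable
    show "AE x in M. x \<in> {x \<in> space M. Tx K Is x > 1 - \<alpha>} \<longrightarrow> L x \<noteq> 0"
      by (intro AE_I2) (simp add: L_def)
    show "AE x in M. L x \<le> 0"
      by (intro AE_I2) (simp add: L_def)
  qed simp
  then have "\<forall>\<^sub>F n in sequentially. Gmu (real n) < 0"
    using order_tendstoD(2)[OF lim] by simp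
  then obtain N where "\<forall>n\<ge>N. Gmu (real n) < 0"
    unfolding eventually_sequentially by blast
  then show ?thesis
    by (intro exI[of _ "real N"]) auto
qed

end

theorem theorem1:
  fixes M :: "'x measure" and N :: "'y measure" and K :: "'x \<Rightarrow> 'y measure"
    and Is :: "'y set list" and w :: "'y set \<Rightarrow> real" and B \<alpha> :: real
  assumes "prob_space M"
    and "K \<in> M \<rightarrow>\<^sub>M prob_algebra N"
    and "\<alpha> \<in> {0<..<1}"
    and "Is \<noteq> []" and "distinct Is" and "set Is \<subseteq> sets N"
    and "\<And>C. C \<in> set Is \<Longrightarrow> 0 < w C \<and> w C < B"
    and "measure M {x \<in> space M. Tx K Is x > 1 - \<alpha>} > 0"
    and "nonatomic M"
    and "\<And>C. C \<in> set Is \<Longrightarrow> nonatomic_rv M (pC K C)"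
    and "\<And>C1 C2 a b. C1 \<in> set Is \<Longrightarrow> C2 \<in> set Is \<Longrightarrow> C1 \<noteq> C2 \<Longrightarrow> (a, b) \<noteq> (0, 0) \<Longrightarrow>
           nonatomic_rv M (\<lambda>x. a * pC K C1 x + b * pC K C2 x)"
  shows "\<exists>\<mu>s::real. \<mu>s \<ge> 0
           \<and> G_con M K \<alpha> (Dmu K Is w \<alpha> \<mu>s) (Cmu K Is w \<alpha> \<mu>s) \<le> 0
           \<and> (\<forall>\<mu>\<ge>0. G_con M K \<alpha> (Dmu K Is w \<alpha> \<mu>) (Cmu K Is w \<alpha> \<mu>) \<le> 0 \<longrightarrow> \<mu>s \<le> \<mu>)
           \<and> admissible M Is (Dmu K Is w \<alpha> \<mu>s) (Cmu K Is w \<alpha> \<mu>s)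
           \<and> (\<forall>D C. admissible M Is D C \<and> G_con M K \<alpha> D C \<le> 0 \<longrightarrow>
                 Pi_obj M K w D C \<le> Pi_obj M K w (Dmu K Is w \<alpha> \<mu>s) (Cmu K Is w \<alpha> \<mu>s))"
proof -
  interpret set_prediction_problem M N K Is w B \<alpha>
    using assms(1-4,7,10,11) by (intro set_prediction_problem.intro set_prediction_problem_axioms.intro)
  obtain a where "0 \<le> a" "Gmu a \<le> 0"
    using exists_Gmu_neg[OF assms(8)] by force
  then obtain \<mu>s where "0 \<le> \<mu>s" "Gmu \<mu>s \<le> 0" "\<And>\<mu>. 0 \<le> \<mu> \<Longrightarrow> Gmu \<mu> \<le> 0 \<Longrightarrow> \<mu>s \<le> \<mu>" "\<mu>s * Gmu \<mu>s = 0"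
    using exists_least_nonpos_point[OF continuous_on_Gmu] by metis
  then show ?thesis
    using admissible_Dmu_Cmu optimal_if_complementary_slackness by blast
qed

end
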